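(* Let $X,Y$ be random variables with $\mathrm{Supp}(X)\subseteq\mathrm{Supp}(Y)=\{x_1,x_2,x_3\}$ (three distinct points). If $(X,Y)\in\mathrm{IC}$, then $X$ and $Y$ have the same distribution or $\mathrm{Corr}(X,Y)=0$.
   Context: $\mathrm{Supp}(X)=\{x:\mathbb P(x-\epsilon<X\le x+\epsilon)>0\ \forall\epsilon>0\}$. $\mathcal L^2$ is the set of non-degenerate real random variables with finite variance. $(X,Y)\in\mathrm{IC}_r$ means $X,Y\in\mathcal L^2$ and $\mathrm{Corr}(X,Y)=\mathrm{Corr}(g(X),g(Y))=r$ for every measurable $g$ with $g(X),g(Y)\in\mathcal L^2$; $\mathrm{IC}=\bigcup_{r\in[-1,1]}\mathrm{IC}_r$. *)

theory Defs
  imports "HOL-Probability.Probability"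
begin

definition supp :: "'a measure \<Rightarrow> ('a \<Rightarrow> real) \<Rightarrow> real set" where
  "supp M X = {x. \<forall>e>0. measure M {w \<in> space M. x - e < X w \<and> X w \<le> x + e} > 0}"

definition L2 :: "'a measure \<Rightarrow> ('a \<Rightarrow> real) \<Rightarrow> bool" where
  "L2 M X \<longleftrightarrow> X \<in> borel_measurable M \<and> integrable M X \<and> integrable M (\<lambda>w. (X w)\<^sup>2)
     \<and> \<not> (\<exists>c. AE w in M. X w = c)"

definition cov :: "'a measure \<Rightarrow> ('a \<Rightarrow> real) \<Rightarrow> ('a \<Rightarrow> real) \<Rightarrow> real" where
  "cov M X Y = (\<integral>w. (X w - (\<integral>v. X v \<partial>M)) * (Y w - (\<integral>v. Y v \<partial>M)) \<partial>M)"

definition corr :: "'a measure \<Rightarrow> ('a \<Rightarrow> real) \<Rightarrow> ('a \<Rightarrow> real) \<Rightarrow> real" where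
  "corr M X Y = cov M X Y / sqrt (cov M X X * cov M Y Y)"

definition IC_r :: "'a measure \<Rightarrow> real \<Rightarrow> ('a \<Rightarrow> real) \<Rightarrow> ('a \<Rightarrow> real) \<Rightarrow> bool" where
  "IC_r M r X Y \<longleftrightarrow> L2 M X \<and> L2 M Y \<and> corr M X Y = r \<and>
     (\<forall>g \<in> borel_measurable borel. L2 M (g \<circ> X) \<and> L2 M (g \<circ> Y) \<longrightarrow>
        corr M (g \<circ> X) (g \<circ> Y) = r)"

definition IC :: "'a measure \<Rightarrow> ('a \<Rightarrow> real) \<Rightarrow> ('a \<Rightarrow> real) \<Rightarrow> bool" where
  "IC M X Y \<longleftrightarrow> (\<exists>r\<in>{-1..1}. IC_r M r X Y)"

end

(*
  Test the IC property with g_t = 1_{x1} + t 1_{x2}. For t \<notin> {0,1} both g_t(X) and g_t(Y) are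
  non-degenerate, so cov(g_t X, g_t Y)^2 = r^2 Var g_t(X) Var g_t(Y) for infinitely many t, an
  identity of quartic polynomials in t. Since Y charges all three points, Var g_t(Y) is a
  quadratic without real roots; it therefore divides cov(g_t X, g_t Y), and when r \<noteq> 0 this makes
  Var g_t(X) a constant multiple of Var g_t(Y). Comparing coefficients gives
  P(X = x_i) P(X = x_j) = l P(Y = x_i) P(Y = x_j) for all i \<noteq> j, and as both mass vectors sum
  to 1 they coincide.
*)
theory Submission
  imports Defs "HOL-Computational_Algebra.Polynomial"
begin

lemma quartic_coeffs_eq_0:
  fixes e0 e1 e2 e3 e4 :: real
  assumes "finite F" and "\<And>t. t \<notin> F \<Longrightarrow> e0 + e1*t + e2*t^2 + e3*t^3 + e4*t^4 = 0"
  shows "e0 = 0 \<and> e1 = 0 \<and> e2 = 0 \<and> e3 = 0 \<and> e4 = 0"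
proof -
  define p where "p = [:e0, e1, e2, e3, e4:]"
  have "poly p t = e0 + e1*t + e2*t^2 + e3*t^3 + e4*t^4" for t
    by (simp add: p_def algebra_simps power_numeral_reduce)
  then have "- F \<subseteq> {t. poly p t = 0}" using assms(2) by auto
  moreover have "infinite (- F)" using assms(1) by (simp add: Compl_eq_Diff_UNIV infinite_UNIV_char_0)
  ultimately have "p = 0" using poly_roots_finite finite_subset by blast
  then show ?thesis by (simp add: p_def)
qed

lemma quadratic_proportional_if_square_identity:
  fixes a0 a1 a2 b0 b1 b2 c0 c1 c2 k :: real
  assumes k: "k \<noteq> 0" and disc: "b1^2 < 4*b0*b2" and "finite F"
    and sq: "\<And>t. t \<notin> F \<Longrightarrow>
      (c0 + c1*t + c2*t^2)^2 = k * (a0 + a1*t + a2*t^2) * (b0 + b1*t + b2*t^2)"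
  shows "\<exists>l. a0 = l*b0 \<and> a1 = l*b1 \<and> a2 = l*b2"
proof -
  have "c0^2 - k*a0*b0 = 0 \<and> 2*c0*c1 - k*(a0*b1 + a1*b0) = 0 \<and>
      c1^2 + 2*c0*c2 - k*(a0*b2 + a1*b1 + a2*b0) = 0 \<and> 2*c1*c2 - k*(a1*b2 + a2*b1) = 0 \<and>
      c2^2 - k*a2*b2 = 0"
  proof (rule quartic_coeffs_eq_0[OF \<open>finite F\<close>])
    fix t assume "t \<notin> F"
    from sq[OF this] show "(c0^2 - k*a0*b0) + (2*c0*c1 - k*(a0*b1 + a1*b0))*t +
        (c1^2 + 2*c0*c2 - k*(a0*b2 + a1*b1 + a2*b0))*t^2 + (2*c1*c2 - k*(a1*b2 + a2*b1))*t^3 +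
        (c2^2 - k*a2*b2)*t^4 = 0"
      by algebra
  qed
  then have q0: "c0^2 = k*a0*b0" and q1: "2*c0*c1 = k*(a0*b1 + a1*b0)"
    and q2: "c1^2 + 2*c0*c2 = k*(a0*b2 + a1*b1 + a2*b0)" and q3: "2*c1*c2 = k*(a1*b2 + a2*b1)"
    and q4: "c2^2 = k*a2*b2" by simp_all
  have b2: "b2 \<noteq> 0" using disc by auto
  txt \<open>Divide \<open>c\<close> by \<open>b\<close>: \<open>c = m b + r\<close> with \<open>r\<close> linear. Then \<open>b\<close> divides \<open>r\<^sup>2\<close>,
    i.e. \<open>r\<^sup>2 = s b\<close> for a constant \<open>s\<close>, which the negative discriminant of \<open>b\<close>
    forces to vanish.\<close>
  define m where "m = c2/b2"
  define r0 where "r0 = c0 - m*b0"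
  define r1 where "r1 = c1 - m*b1"
  define s where "s = k*a0 - m^2*b0 - 2*m*r0"
  have c2: "c2 = m*b2" and c1: "c1 = m*b1 + r1" and c0: "c0 = m*b0 + r0"
    using b2 by (simp_all add: m_def r0_def r1_def)
  have "b2 * (k*a2) = b2 * (m^2*b2)" using q4 unfolding c2 by algebra
  then have e2: "k*a2 = m^2*b2" using b2 by simp
  have "b2 * (k*a1) = b2 * (m^2*b1 + 2*m*r1)" using q3 e2 unfolding c2 c1 by algebra
  then have e1: "k*a1 = m^2*b1 + 2*m*r1" using b2 by simp
  have f2: "r1^2 = s*b2" using q2 e1 e2 unfolding c2 c1 c0 s_def by algebra
  have f1: "2*r0*r1 = s*b1" using q1 e1 unfolding c1 c0 s_def by algebra
  have f0: "r0^2 = s*b0" using q0 unfolding c0 s_def by algebra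
  have "s^2 * (4*b0*b2 - b1^2) = 0"
  proof -
    have "(2*r0*r1)^2 = 4 * r0^2 * r1^2" by algebra
    then show ?thesis using f0 f1 f2 by algebra
  qed
  then have "s = 0" using disc by simp
  then have "r0 = 0" "r1 = 0" using f0 f2 by simp_all
  then have "a0 = (m^2/k)*b0 \<and> a1 = (m^2/k)*b1 \<and> a2 = (m^2/k)*b2"
    using e1 e2 \<open>s = 0\<close> k unfolding s_def by (simp add: field_simps)
  then show ?thesis by blast
qed

text \<open>The variance of a random variable taking the values \<open>1\<close>, \<open>t\<close>, \<open>0\<close> with probabilities
  \<open>p1\<close>, \<open>p2\<close>, \<open>p3\<close> (where \<open>p1 + p2 + p3 = 1\<close>).\<close>

definition two_level_variance :: "real \<Rightarrow> real \<Rightarrow> real \<Rightarrow> real \<Rightarrow> real" where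
  "two_level_variance p1 p2 p3 t = p1*p2*(1 - t)^2 + p1*p3 + p2*p3*t^2"

lemma two_level_variance_pos:
  assumes "p1 \<ge> 0" "p2 \<ge> 0" "p3 \<ge> 0" and "\<not> (p1*p2 = 0 \<and> p1*p3 = 0 \<and> p2*p3 = 0)"
    and "t \<noteq> 0" "t \<noteq> 1"
  shows "two_level_variance p1 p2 p3 t > 0"
proof -
  have "p1*p2 > 0 \<or> p1*p3 > 0 \<or> p2*p3 > 0" using assms(1-4) by (simp add: less_le)
  moreover have "p1*p2*(1 - t)^2 \<ge> 0" "p1*p3 \<ge> 0" "p2*p3*t^2 \<ge> 0" using assms(1-3) by simp_all
  moreover have "(1 - t)^2 > 0" "t^2 > 0" using assms(5,6) by simp_all
  ultimately show ?thesis unfolding two_level_variance_def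
    by (smt (verit) mult_pos_pos)
qed

lemma eq_if_pairwise_products_proportional:
  fixes p1 p2 p3 q1 q2 q3 l :: real
  assumes p: "p1 \<ge> 0" "p2 \<ge> 0" "p3 \<ge> 0" "p1 + p2 + p3 = 1"
    and q: "q1 > 0" "q2 > 0" "q3 > 0" "q1 + q2 + q3 = 1"
    and nd: "\<not> (p1*p2 = 0 \<and> p1*p3 = 0 \<and> p2*p3 = 0)"
    and h12: "p1*p2 = l*(q1*q2)" and h13: "p1*p3 = l*(q1*q3)" and h23: "p2*p3 = l*(q2*q3)"
  shows "p1 = q1 \<and> p2 = q2 \<and> p3 = q3"
proof -
  have "l \<noteq> 0" using nd h12 h13 h23 by auto
  have sq: "a = sqrt l * b"
    if "a*a' = l*(b*b')" "a*a'' = l*(b*b'')" "a'*a'' = l*(b'*b'')" "a \<ge> 0" "b > 0" "b'*b'' > 0"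
    for a a' a'' b b' b'' :: real
  proof -
    have "a^2 * (l*(b'*b'')) = (a*a') * (a*a'')" using that(3) by (simp add: power2_eq_square ac_simps)
    also have "\<dots> = (l*b^2) * (l*(b'*b''))" using that(1,2) by (simp add: power2_eq_square ac_simps)
    finally have "a^2 * (l*(b'*b'')) = (l*b^2) * (l*(b'*b''))" .
    then have "a^2 = l*b^2" using \<open>l \<noteq> 0\<close> that(6) by auto
    then have "a = sqrt (l*b^2)" using that(4) by (simp add: real_sqrt_unique)
    then show ?thesis using that(5) by (simp add: real_sqrt_mult)
  qed
  have "p1 = sqrt l * q1" using sq[OF h12 h13 h23] p q by simp
  moreover have "p2 = sqrt l * q2"
    using sq[where a=p2 and a'=p1 and a''=p3 and b=q2 and b'=q1 and b''=q3] h12 h13 h23 p q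
    by (simp add: ac_simps)
  moreover have "p3 = sqrt l * q3"
    using sq[where a=p3 and a'=p1 and a''=p2 and b=q3 and b'=q1 and b''=q2] h12 h13 h23 p q
    by (simp add: ac_simps)
  ultimately have "sqrt l * (q1 + q2 + q3) = 1" using p(4) by (simp add: algebra_simps)
  then have "sqrt l = 1" using q(4) by simp
  with \<open>p1 = sqrt l * q1\<close> \<open>p2 = sqrt l * q2\<close> \<open>p3 = sqrt l * q3\<close> show ?thesis by simp
qed

lemma eq_if_two_level_variance_identity:
  fixes p1 p2 p3 q1 q2 q3 c0 c1 c2 k :: real
  assumes p: "p1 \<ge> 0" "p2 \<ge> 0" "p3 \<ge> 0" "p1 + p2 + p3 = 1"
    and q: "q1 > 0" "q2 > 0" "q3 > 0" "q1 + q2 + q3 = 1"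
    and nd: "\<not> (p1*p2 = 0 \<and> p1*p3 = 0 \<and> p2*p3 = 0)"
    and "k \<noteq> 0" "finite F"
    and sq: "\<And>t. t \<notin> F \<Longrightarrow>
      (c0 + c1*t + c2*t^2)^2 = k * two_level_variance p1 p2 p3 t * two_level_variance q1 q2 q3 t"
  shows "p1 = q1 \<and> p2 = q2 \<and> p3 = q3"
proof -
  have expand: "two_level_variance u1 u2 u3 t = (u1*u2 + u1*u3) + (-2*u1*u2)*t + (u1*u2 + u2*u3)*t^2"
    for u1 u2 u3 t :: real
    unfolding two_level_variance_def by algebra
  have "4*(q1*q2 + q1*q3)*(q1*q2 + q2*q3) - (-2*q1*q2)^2 = 4*(q1*q2*q3)*(q1 + q2 + q3)" by algebra
  moreover have "q1*q2*q3*(q1 + q2 + q3) > 0" using q by simp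
  ultimately have disc: "(-2*q1*q2)^2 < 4*(q1*q2 + q1*q3)*(q1*q2 + q2*q3)" by linarith
  obtain l where "p1*p2 + p1*p3 = l*(q1*q2 + q1*q3)" "-2*p1*p2 = l*(-2*q1*q2)"
      "p1*p2 + p2*p3 = l*(q1*q2 + q2*q3)"
    using quadratic_proportional_if_square_identity[OF \<open>k \<noteq> 0\<close> disc \<open>finite F\<close>] sq
    unfolding expand by blast
  then have "p1*p2 = l*(q1*q2)" "p1*p3 = l*(q1*q3)" "p2*p3 = l*(q2*q3)"
    by (simp_all add: algebra_simps)
  then show ?thesis by (rule eq_if_pairwise_products_proportional[OF p q nd])
qed

lemma AE_in_supp:
  assumes "prob_space M" and Z: "Z \<in> borel_measurable M"
  shows "AE w in M. Z w \<in> supp M Z"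
proof -
  interpret prob_space M by fact
  define F where "F = {U. open U \<and> Z -` U \<inter> space M \<in> null_sets M}"
  have cover: "x \<in> \<Union>F" if "x \<notin> supp M Z" for x
  proof -
    from that obtain e where e: "e > 0"
      and m: "\<not> measure M {w \<in> space M. x - e < Z w \<and> Z w \<le> x + e} > 0"
      unfolding supp_def by auto
    let ?S = "{w \<in> space M. x - e < Z w \<and> Z w \<le> x + e}"
    have "?S \<in> sets M" using Z by measurable
    moreover have "measure M ?S = 0" using m measure_nonneg[of M ?S] by linarith
    ultimately have "?S \<in> null_sets M" by (simp add: emeasure_eq_measure null_sets_def)
    moreover have "Z -` {x-e<..<x+e} \<inter> space M \<in> sets M" using Z by measurable
    moreover have "Z -` {x-e<..<x+e} \<inter> space M \<subseteq> ?S" by auto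
    ultimately have "{x-e<..<x+e} \<in> F" unfolding F_def using null_sets_subset by auto
    moreover have "x \<in> {x-e<..<x+e}" using e by auto
    ultimately show ?thesis by blast
  qed
  have "\<And>U. U \<in> F \<Longrightarrow> open U" unfolding F_def by auto
  then obtain F' where F': "F' \<subseteq> F" "countable F'" "\<Union>F' = \<Union>F" by (rule Lindelof)
  have "AE w in M. \<forall>U\<in>F'. w \<notin> Z -` U \<inter> space M"
    using F' by (intro AE_ball_countable' AE_not_in) (auto simp: F_def)
  then show ?thesis
  proof (rule AE_mp, intro AE_I2 impI)
    fix w assume "w \<in> space M" "\<forall>U\<in>F'. w \<notin> Z -` U \<inter> space M"
    then show "Z w \<in> supp M Z" using cover F'(3) by blast
  qed
qed

lemma point_mass_pos_if_in_supp:
  assumes "prob_space M" and Z: "Z \<in> borel_measurable M" and "finite S"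
    and AE: "AE w in M. Z w \<in> S" and x: "x \<in> supp M Z"
  shows "measure M {w \<in> space M. Z w = x} > 0"
proof -
  interpret prob_space M by fact
  obtain d where d: "d > 0" "\<forall>y\<in>S. y \<noteq> x \<longrightarrow> d \<le> dist x y"
    using finite_set_avoid[OF \<open>finite S\<close>] by blast
  let ?I = "{w \<in> space M. x - d/2 < Z w \<and> Z w \<le> x + d/2}"
  have "measure M ?I > 0" using x d(1) unfolding supp_def by simp
  moreover have "measure M ?I = measure M {w \<in> space M. Z w = x}"
  proof (rule measure_eq_AE)
    show "AE w in M. (w \<in> ?I) = (w \<in> {w \<in> space M. Z w = x})"
      using AE by (rule AE_mp) (use d in \<open>force intro!: AE_I2 simp: dist_real_def\<close>)
  qed (use Z in measurable)
  ultimately show ?thesis by simp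
qed

lemma emeasure_distr_finite_values:
  fixes Z :: "'a \<Rightarrow> real"
  assumes "prob_space M" and Z: "Z \<in> borel_measurable M" and fin: "finite S"
    and AE: "AE w in M. Z w \<in> S" and A: "A \<in> sets borel"
  shows "emeasure (distr M borel Z) A = (\<Sum>x\<in>A \<inter> S. ennreal (measure M {w \<in> space M. Z w = x}))"
proof -
  interpret prob_space M by fact
  let ?D = "distr M borel Z"
  have S: "S \<in> sets borel" using fin by (simp add: finite_imp_closed)
  have "AE x in ?D. x \<in> S" using AE S Z by (subst AE_distr_iff) auto
  then have "emeasure ?D A = emeasure ?D (A \<inter> S)"
    by (intro emeasure_eq_AE) (auto simp: A S)
  also have "\<dots> = (\<Sum>x\<in>A \<inter> S. emeasure ?D {x})"
    using fin by (intro emeasure_eq_sum_singleton) auto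
  also have "\<dots> = (\<Sum>x\<in>A \<inter> S. ennreal (measure M {w \<in> space M. Z w = x}))"
  proof (rule sum.cong)
    fix x
    have "Z -` {x} \<inter> space M = {w \<in> space M. Z w = x}" by blast
    then show "emeasure ?D {x} = ennreal (measure M {w \<in> space M. Z w = x})"
      using Z by (simp add: emeasure_distr emeasure_eq_measure)
  qed simp
  finally show ?thesis .
qed

lemma point_masses_sum_eq_1:
  fixes Z :: "'a \<Rightarrow> real"
  assumes "prob_space M" and Z: "Z \<in> borel_measurable M" and "finite S"
    and "AE w in M. Z w \<in> S"
  shows "(\<Sum>x\<in>S. measure M {w \<in> space M. Z w = x}) = 1"
proof -
  interpret prob_space M by fact
  have "ennreal (\<Sum>x\<in>S. measure M {w \<in> space M. Z w = x}) = emeasure (distr M borel Z) UNIV"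
    using emeasure_distr_finite_values[OF assms, of UNIV] by simp
  also have "\<dots> = 1" using Z by (simp add: emeasure_distr emeasure_space_1)
  finally show ?thesis by simp
qed

lemma distr_eq_if_point_masses_eq:
  fixes X Y :: "'a \<Rightarrow> real"
  assumes "prob_space M" and X: "X \<in> borel_measurable M" and Y: "Y \<in> borel_measurable M"
    and "finite S" and "AE w in M. X w \<in> S" and "AE w in M. Y w \<in> S"
    and eq: "\<And>x. x \<in> S \<Longrightarrow>
      measure M {w \<in> space M. X w = x} = measure M {w \<in> space M. Y w = x}"
  shows "distr M borel X = distr M borel Y"
proof (rule measure_eqI)
  fix A assume "A \<in> sets (distr M borel X)"
  then have "A \<in> sets borel" by simp
  then show "emeasure (distr M borel X) A = emeasure (distr M borel Y) A"
    using eq by (simp add: emeasure_distr_finite_values[OF assms(1) X assms(4,5)]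
        emeasure_distr_finite_values[OF assms(1) Y assms(4,6)])
qed simp

lemma L2_point_mass_neq_1:
  assumes "prob_space M" and "L2 M Z"
  shows "measure M {w \<in> space M. Z w = c} \<noteq> 1"
proof
  interpret prob_space M by fact
  have Z: "Z \<in> borel_measurable M" using \<open>L2 M Z\<close> unfolding L2_def by simp
  assume "measure M {w \<in> space M. Z w = c} = 1"
  moreover have "{w \<in> space M. Z w = c} \<in> sets M" using Z by measurable
  ultimately have "AE w in M. Z w = c" by (simp add: prob_Collect_eq_1)
  then show False using \<open>L2 M Z\<close> unfolding L2_def by blast
qed

lemma cov_cong:
  assumes "\<And>w. w \<in> space M \<Longrightarrow> U w = U' w" and "\<And>w. w \<in> space M \<Longrightarrow> V w = V' w"
  shows "cov M U V = cov M U' V'"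
proof -
  have "(\<integral>w. U w \<partial>M) = (\<integral>w. U' w \<partial>M)" "(\<integral>w. V w \<partial>M) = (\<integral>w. V' w \<partial>M)"
    using assms by (auto intro: Bochner_Integration.integral_cong)
  then show ?thesis unfolding cov_def using assms by (auto intro: Bochner_Integration.integral_cong)
qed

lemma cov_eq_integral_mult_diff:
  assumes "prob_space M" and U: "integrable M U" and V: "integrable M V"
    and UV: "integrable M (\<lambda>w. U w * V w)"
  shows "cov M U V = (\<integral>w. U w * V w \<partial>M) - (\<integral>w. U w \<partial>M) * (\<integral>w. V w \<partial>M)"
proof -
  interpret prob_space M by fact
  define a where "a = (\<integral>w. U w \<partial>M)"
  define b where "b = (\<integral>w. V w \<partial>M)"
  have "cov M U V = (\<integral>w. (U w * V w - b * U w) - (a * V w - a * b) \<partial>M)"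
    unfolding cov_def a_def[symmetric] b_def[symmetric]
    by (rule Bochner_Integration.integral_cong) (auto simp: algebra_simps)
  also have "\<dots> = (\<integral>w. U w * V w \<partial>M) - b * a - (a * b - a * b)"
    using U V UV by (simp add: a_def b_def prob_space)
  finally show ?thesis by (simp add: a_def b_def)
qed

lemma cov_indicator_sums:
  assumes "prob_space M" and "finite I" and "finite J"
    and A: "\<And>i. i \<in> I \<Longrightarrow> A i \<in> sets M" and B: "\<And>j. j \<in> J \<Longrightarrow> B j \<in> sets M"
  shows "cov M (\<lambda>w. \<Sum>i\<in>I. a i * indicator (A i) w) (\<lambda>w. \<Sum>j\<in>J. b j * indicator (B j) w)
    = (\<Sum>i\<in>I. \<Sum>j\<in>J. a i * b j * (measure M (A i \<inter> B j) - measure M (A i) * measure M (B j)))"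
proof -
  interpret prob_space M by fact
  let ?U = "\<lambda>w. \<Sum>i\<in>I. a i * indicator (A i) w"
  let ?V = "\<lambda>w. \<Sum>j\<in>J. b j * indicator (B j) w"
  note [simp del] = sum_mult_indicator
  have ind: "integrable M (indicator C :: 'a \<Rightarrow> real)" if "C \<in> sets M" for C
    using that by (simp add: integrable_real_indicator emeasure_finite less_top[symmetric])
  have prod: "?U w * ?V w = (\<Sum>i\<in>I. \<Sum>j\<in>J. (a i * b j) * indicator (A i \<inter> B j) w)" for w
    by (simp add: sum_product indicator_inter_arith ac_simps)
  have "integrable M (\<lambda>w. ?U w * ?V w)"
    using A B ind unfolding prod by (auto intro!: Bochner_Integration.integrable_sum)
  then have "cov M ?U ?V
      = (\<integral>w. ?U w * ?V w \<partial>M) - (\<integral>w. ?U w \<partial>M) * (\<integral>w. ?V w \<partial>M)"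
    using assms(1) A B ind by (intro cov_eq_integral_mult_diff) (auto intro!: Bochner_Integration.integrable_sum)
  also have "\<dots> = (\<Sum>i\<in>I. \<Sum>j\<in>J. a i * b j * measure M (A i \<inter> B j))
      - (\<Sum>i\<in>I. a i * measure M (A i)) * (\<Sum>j\<in>J. b j * measure M (B j))"
    using A B ind unfolding prod
    by (simp add: Bochner_Integration.integral_sum Bochner_Integration.integrable_sum sets.Int_space_eq2)
  also have "\<dots> = (\<Sum>i\<in>I. \<Sum>j\<in>J.
      a i * b j * (measure M (A i \<inter> B j) - measure M (A i) * measure M (B j)))"
    by (simp add: sum_product sum_subtractf right_diff_distrib ac_simps)
  finally show ?thesis .
qed

lemma L2_if_bounded_cov_pos:
  assumes "prob_space M" and U: "U \<in> borel_measurable M"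
    and bound: "\<And>w. w \<in> space M \<Longrightarrow> \<bar>U w\<bar> \<le> c" and pos: "cov M U U > 0"
  shows "L2 M U"
proof -
  interpret prob_space M by fact
  have "integrable M U" using U bound by (intro integrable_const_bound[where B=c]) auto
  moreover have "integrable M (\<lambda>w. (U w)\<^sup>2)"
  proof (rule integrable_const_bound[where B="c^2"])
    show "AE w in M. norm ((U w)\<^sup>2) \<le> c^2"
    proof (intro AE_I2)
      fix w assume "w \<in> space M"
      then have "\<bar>U w\<bar> \<le> \<bar>c\<bar>" using bound by fastforce
      then show "norm ((U w)\<^sup>2) \<le> c^2" by (simp add: abs_le_square_iff)
    qed
  qed (use U in measurable)
  moreover have "\<not> (AE w in M. U w = k)" for k
  proof
    assume k: "AE w in M. U w = k"
    then have "(\<integral>w. U w \<partial>M) = (\<integral>w. k \<partial>M)" using U by (intro integral_cong_AE) auto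
    then have "(\<integral>w. U w \<partial>M) = k" by (simp add: prob_space)
    then have "cov M U U = (\<integral>w. 0 \<partial>M)"
      unfolding cov_def using k U by (intro integral_cong_AE) auto
    then show False using pos by simp
  qed
  ultimately show ?thesis unfolding L2_def using U by blast
qed

lemma IC_r_cov_square:
  assumes "prob_space M" and IC: "IC_r M r X Y" and g: "g \<in> borel_measurable borel"
    and bound: "\<And>x. \<bar>g x\<bar> \<le> c"
    and posX: "cov M (g \<circ> X) (g \<circ> X) > 0" and posY: "cov M (g \<circ> Y) (g \<circ> Y) > 0"
  shows "(cov M (g \<circ> X) (g \<circ> Y))^2
    = r^2 * cov M (g \<circ> X) (g \<circ> X) * cov M (g \<circ> Y) (g \<circ> Y)"
proof -
  have "X \<in> borel_measurable M" "Y \<in> borel_measurable M" using IC unfolding IC_r_def L2_def by auto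
  then have "L2 M (g \<circ> X)" "L2 M (g \<circ> Y)"
    using assms(1) g bound posX posY by (auto intro!: L2_if_bounded_cov_pos)
  then have "cov M (g \<circ> X) (g \<circ> Y)
      = r * sqrt (cov M (g \<circ> X) (g \<circ> X) * cov M (g \<circ> Y) (g \<circ> Y))"
    using IC g posX posY unfolding IC_r_def corr_def by (auto simp: field_simps)
  then show ?thesis using posX posY by (simp add: power_mult_distrib)
qed

definition two_level :: "real \<Rightarrow> real \<Rightarrow> real \<Rightarrow> real \<Rightarrow> real" where
  "two_level x1 x2 t x = indicator {x1} x + t * indicator {x2} x"

lemma two_level_measurable [measurable]: "two_level x1 x2 t \<in> borel_measurable borel"
  unfolding two_level_def by measurable

lemma abs_two_level_le: "\<bar>two_level x1 x2 t x\<bar> \<le> 1 + \<bar>t\<bar>"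
  unfolding two_level_def indicator_def by (cases "x = x1"; cases "x = x2") auto

lemma cov_two_level_comp:
  fixes Z W :: "'a \<Rightarrow> real"
  assumes "prob_space M" and Z: "Z \<in> borel_measurable M" and W: "W \<in> borel_measurable M"
    and "x1 \<noteq> x2"
  defines "A \<equiv> \<lambda>x. {w \<in> space M. Z w = x}" and "B \<equiv> \<lambda>x. {w \<in> space M. W w = x}"
  shows "cov M (two_level x1 x2 t \<circ> Z) (two_level x1 x2 t \<circ> W)
    = (measure M (A x1 \<inter> B x1) - measure M (A x1) * measure M (B x1))
      + ((measure M (A x1 \<inter> B x2) - measure M (A x1) * measure M (B x2))
        + (measure M (A x2 \<inter> B x1) - measure M (A x2) * measure M (B x1))) * t
      + (measure M (A x2 \<inter> B x2) - measure M (A x2) * measure M (B x2)) * t^2"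
proof -
  define u where "u y = (if y = x1 then 1 else t)" for y :: real
  have "two_level x1 x2 t (V w) = (\<Sum>y\<in>{x1, x2}. u y * indicator {w \<in> space M. V w = y} w)"
    if "w \<in> space M" for V :: "'a \<Rightarrow> real" and w
    using that \<open>x1 \<noteq> x2\<close> by (simp add: two_level_def u_def indicator_def)
  then have "cov M (two_level x1 x2 t \<circ> Z) (two_level x1 x2 t \<circ> W)
      = cov M (\<lambda>w. \<Sum>y\<in>{x1, x2}. u y * indicator (A y) w)
          (\<lambda>w. \<Sum>y\<in>{x1, x2}. u y * indicator (B y) w)"
    unfolding A_def B_def by (intro cov_cong) auto
  also have "\<dots> = (\<Sum>y\<in>{x1, x2}. \<Sum>z\<in>{x1, x2}. u y * u z *
      (measure M (A y \<inter> B z) - measure M (A y) * measure M (B z)))"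
    using Z W unfolding A_def B_def by (intro cov_indicator_sums[OF assms(1)]) auto
  finally show ?thesis
    using \<open>x1 \<noteq> x2\<close> by (simp add: u_def power2_eq_square) (simp add: algebra_simps)
qed

lemma cov_two_level_comp_self:
  fixes Z :: "'a \<Rightarrow> real"
  assumes "prob_space M" and Z: "Z \<in> borel_measurable M"
    and "x1 \<noteq> x2" "x1 \<noteq> x3" "x2 \<noteq> x3" and "AE w in M. Z w \<in> {x1, x2, x3}"
  defines "p \<equiv> \<lambda>x. measure M {w \<in> space M. Z w = x}"
  shows "cov M (two_level x1 x2 t \<circ> Z) (two_level x1 x2 t \<circ> Z) = two_level_variance (p x1) (p x2) (p x3) t"
proof -
  have "p x1 + p x2 + p x3 = 1"
    using point_masses_sum_eq_1[OF assms(1,2) _ assms(6)] assms(3-5) by (simp add: p_def)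
  then have p3: "p x3 = 1 - p x1 - p x2" by simp
  have disj: "{w \<in> space M. Z w = x1} \<inter> {w \<in> space M. Z w = x2} = {}"
    "{w \<in> space M. Z w = x2} \<inter> {w \<in> space M. Z w = x1} = {}" using \<open>x1 \<noteq> x2\<close> by auto
  show ?thesis
    unfolding cov_two_level_comp[OF assms(1,2,2,3)] two_level_variance_def p3
    unfolding p_def Int_absorb disj measure_empty by algebra
qed

lemma L2_three_point_masses_nondegenerate:
  fixes Z :: "'a \<Rightarrow> real"
  assumes "prob_space M" and "L2 M Z"
    and "x1 \<noteq> x2" "x1 \<noteq> x3" "x2 \<noteq> x3" and "AE w in M. Z w \<in> {x1, x2, x3}"
  defines "p \<equiv> \<lambda>x. measure M {w \<in> space M. Z w = x}"
  shows "\<not> (p x1 * p x2 = 0 \<and> p x1 * p x3 = 0 \<and> p x2 * p x3 = 0)"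
proof -
  have "Z \<in> borel_measurable M" using \<open>L2 M Z\<close> unfolding L2_def by simp
  then have "p x1 + p x2 + p x3 = 1"
    using point_masses_sum_eq_1[OF assms(1) _ _ assms(6)] assms(3-5) by (simp add: p_def)
  then show ?thesis using L2_point_mass_neq_1[OF assms(1,2)] unfolding p_def by auto
qed

lemma IC_r_cov_two_level_square:
  fixes X Y :: "'a \<Rightarrow> real"
  assumes "prob_space M" and IC: "IC_r M r X Y" and "x1 \<noteq> x2" "x1 \<noteq> x3" "x2 \<noteq> x3"
    and AEX: "AE w in M. X w \<in> {x1, x2, x3}" and AEY: "AE w in M. Y w \<in> {x1, x2, x3}"
    and "t \<noteq> 0" "t \<noteq> 1"
  defines "p \<equiv> \<lambda>x. measure M {w \<in> space M. X w = x}"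
    and "q \<equiv> \<lambda>x. measure M {w \<in> space M. Y w = x}"
  shows "(cov M (two_level x1 x2 t \<circ> X) (two_level x1 x2 t \<circ> Y))^2
    = r^2 * two_level_variance (p x1) (p x2) (p x3) t * two_level_variance (q x1) (q x2) (q x3) t"
proof -
  have L2: "L2 M X" "L2 M Y" using IC unfolding IC_r_def by auto
  then have "X \<in> borel_measurable M" "Y \<in> borel_measurable M" unfolding L2_def by auto
  then have var:
      "cov M (two_level x1 x2 t \<circ> X) (two_level x1 x2 t \<circ> X) = two_level_variance (p x1) (p x2) (p x3) t"
      "cov M (two_level x1 x2 t \<circ> Y) (two_level x1 x2 t \<circ> Y) = two_level_variance (q x1) (q x2) (q x3) t"
    using cov_two_level_comp_self[OF assms(1) _ assms(3-5)] AEX AEY unfolding p_def q_def by auto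
  have "\<not> (p x1 * p x2 = 0 \<and> p x1 * p x3 = 0 \<and> p x2 * p x3 = 0)"
    unfolding p_def by (rule L2_three_point_masses_nondegenerate[OF assms(1) L2(1) assms(3-5) AEX])
  moreover have "\<not> (q x1 * q x2 = 0 \<and> q x1 * q x3 = 0 \<and> q x2 * q x3 = 0)"
    unfolding q_def by (rule L2_three_point_masses_nondegenerate[OF assms(1) L2(2) assms(3-5) AEY])
  ultimately have "two_level_variance (p x1) (p x2) (p x3) t > 0"
      "two_level_variance (q x1) (q x2) (q x3) t > 0"
    using \<open>t \<noteq> 0\<close> \<open>t \<noteq> 1\<close> by (auto intro!: two_level_variance_pos simp: p_def q_def)
  then show ?thesis
    using IC_r_cov_square[OF assms(1) IC two_level_measurable[of x1 x2 t] abs_two_level_le]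
    by (simp add: var)
qed

theorem lemma4:
  fixes M :: "'a measure" and X Y :: "'a \<Rightarrow> real" and x1 x2 x3 :: real
  assumes "prob_space M"
    and "X \<in> borel_measurable M" and "Y \<in> borel_measurable M"
    and "x1 \<noteq> x2" and "x1 \<noteq> x3" and "x2 \<noteq> x3"
    and "supp M Y = {x1, x2, x3}"
    and "supp M X \<subseteq> supp M Y"
    and "IC M X Y"
  shows "distr M borel X = distr M borel Y \<or> corr M X Y = 0"
proof (rule disjCI)
  assume "corr M X Y \<noteq> 0"
  obtain r where IC: "IC_r M r X Y" using \<open>IC M X Y\<close> unfolding IC_def by blast
  then have "r \<noteq> 0" and "L2 M X" using \<open>corr M X Y \<noteq> 0\<close> unfolding IC_r_def by auto
  define p where "p x = measure M {w \<in> space M. X w = x}" for x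
  define q where "q x = measure M {w \<in> space M. Y w = x}" for x
  have AEY: "AE w in M. Y w \<in> {x1, x2, x3}" using AE_in_supp[OF assms(1,3)] assms(7) by simp
  have AEX: "AE w in M. X w \<in> {x1, x2, x3}"
    using AE_in_supp[OF assms(1,2)] by eventually_elim (use assms(7,8) in auto)
  have q_pos: "q x1 > 0" "q x2 > 0" "q x3 > 0"
    using point_mass_pos_if_in_supp[OF assms(1,3) _ AEY] assms(7) by (auto simp: q_def)
  have sums: "p x1 + p x2 + p x3 = 1" "q x1 + q x2 + q x3 = 1"
    using point_masses_sum_eq_1[OF assms(1,2) _ AEX] point_masses_sum_eq_1[OF assms(1,3) _ AEY]
      assms(4-6) by (simp_all add: p_def q_def)
  have p_nonneg: "p x1 \<ge> 0" "p x2 \<ge> 0" "p x3 \<ge> 0" by (simp_all add: p_def)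
  have p_nondegen: "\<not> (p x1 * p x2 = 0 \<and> p x1 * p x3 = 0 \<and> p x2 * p x3 = 0)"
    unfolding p_def by (rule L2_three_point_masses_nondegenerate[OF assms(1) \<open>L2 M X\<close> assms(4-6) AEX])
  obtain c0 c1 c2 where cov:
    "\<And>t. cov M (two_level x1 x2 t \<circ> X) (two_level x1 x2 t \<circ> Y) = c0 + c1*t + c2*t^2"
    using cov_two_level_comp[OF assms(1-4)] by blast
  have key: "(c0 + c1*t + c2*t^2)^2
      = r^2 * two_level_variance (p x1) (p x2) (p x3) t * two_level_variance (q x1) (q x2) (q x3) t"
    if "t \<notin> {0, 1}" for t
    using IC_r_cov_two_level_square[OF assms(1) IC assms(4-6) AEX AEY] that
    unfolding cov p_def q_def by simp
  have "p x1 = q x1 \<and> p x2 = q x2 \<and> p x3 = q x3"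
    using eq_if_two_level_variance_identity[where F="{0, 1}", OF p_nonneg sums(1) q_pos sums(2)
        p_nondegen _ _ key] \<open>r \<noteq> 0\<close> by simp
  then show "distr M borel X = distr M borel Y"
    using distr_eq_if_point_masses_eq[OF assms(1-3) _ AEX AEY] unfolding p_def q_def by auto
qed

end
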